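(* Let $d\ge1$, $0<p<\infty$, let $u$ be a weight on $\mathbb{R}^d$ and $w$ a weight on $(0,\infty)$ with $W(t)=\int_0^t w(s)\,ds$. Assume that $M:\Lambda^p_u(w)\to\Lambda^{p,\infty}_u(w)$ is bounded, i.e. there is $C>0$ with $\|Mf\|_{\Lambda^{p,\infty}_u(w)}\le C\|f\|_{\Lambda^p_u(w)}$ for all measurable $f$. Then there is a constant $K>0$ such that for every $0<\lambda<1$ and every Borel set $E\subset\mathbb{R}^d$, $$\big\|\chi_{\{M\chi_E>\lambda\}}\,M\chi_E\big\|^p_{\Lambda^p_u(w)}\le K\Big(1+\log\frac1\lambda\Big)\|\chi_E\|^p_{\Lambda^p_u(w)}.$$
   Context: A weight on $\mathbb{R}^d$ is a positive locally integrable function; $u(E)=\int_E u$. The Hardy–Littlewood maximal operator is $Mf(x)=\sup_{Q\ni x}\frac{1}{|Q|}\int_Q|f(y)|\,dy$, the supremum over all cubes $Q\subset\mathbb{R}^d$ containing $x$. For measurable $f$, $\|f\|^p_{\Lambda^p_u(w)}=\int_0^\infty p\,t^{p-1}W\big(u(\{x:|f(x)|>t\})\big)\,dt$ and $\|f\|_{\Lambda^{p,\infty}_u(w)}=\sup_{t>0}t\,W\big(u(\{x:|f(x)|>t\})\big)^{1/p}$. *)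

theory Defs
  imports "HOL-Analysis.Analysis"
begin

definition cubes :: "'a::euclidean_space set set" where
  "cubes = {cbox a (a + r *\<^sub>R One) | a r. r > 0}"

definition maximal_op :: "('a::euclidean_space \<Rightarrow> real) \<Rightarrow> 'a \<Rightarrow> ennreal" where
  "maximal_op f x = (SUP Q\<in>{Q\<in>cubes. x \<in> Q}.
       (\<integral>\<^sup>+ y\<in>Q. ennreal \<bar>f y\<bar> \<partial>lebesgue) / emeasure lebesgue Q)"

definition weight_Rd :: "('a::euclidean_space \<Rightarrow> real) \<Rightarrow> bool" where
  "weight_Rd u \<longleftrightarrow> (\<forall>x. u x > 0) \<and> u \<in> borel_measurable lebesgue \<and>
     (\<forall>K. compact K \<longrightarrow> set_integrable lebesgue K u)"

definition weight_pos :: "(real \<Rightarrow> real) \<Rightarrow> bool" where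
  "weight_pos w \<longleftrightarrow> (\<forall>s>0. w s > 0) \<and>
     (\<forall>K. compact K \<and> K \<subseteq> {0<..} \<longrightarrow> set_integrable lborel K w)"

definition wmeasure :: "('a::euclidean_space \<Rightarrow> real) \<Rightarrow> 'a set \<Rightarrow> ennreal" where
  "wmeasure u E = (\<integral>\<^sup>+ x\<in>E. ennreal (u x) \<partial>lebesgue)"

definition Wfun :: "(real \<Rightarrow> real) \<Rightarrow> ennreal \<Rightarrow> ennreal" where
  "Wfun w t = (\<integral>\<^sup>+ s\<in>{s. 0 < s \<and> ennreal s < t}. ennreal (w s) \<partial>lborel)"

definition ennreal_powr :: "ennreal \<Rightarrow> real \<Rightarrow> ennreal" where
  "ennreal_powr x a = (if x = \<infinity> then \<infinity> else ennreal (enn2real x powr a))"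

definition lorentz_pow ::
  "real \<Rightarrow> ('a::euclidean_space \<Rightarrow> real) \<Rightarrow> (real \<Rightarrow> real) \<Rightarrow> ('a \<Rightarrow> ennreal) \<Rightarrow> ennreal" where
  "lorentz_pow p u w f = (\<integral>\<^sup>+ t\<in>{0<..}.
      ennreal (p * t powr (p - 1)) * Wfun w (wmeasure u {x. f x > ennreal t}) \<partial>lborel)"

definition lorentz_norm ::
  "real \<Rightarrow> ('a::euclidean_space \<Rightarrow> real) \<Rightarrow> (real \<Rightarrow> real) \<Rightarrow> ('a \<Rightarrow> ennreal) \<Rightarrow> ennreal" where
  "lorentz_norm p u w f = ennreal_powr (lorentz_pow p u w f) (1 / p)"

definition weak_lorentz_norm ::
  "real \<Rightarrow> ('a::euclidean_space \<Rightarrow> real) \<Rightarrow> (real \<Rightarrow> real) \<Rightarrow> ('a \<Rightarrow> ennreal) \<Rightarrow> ennreal" where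
  "weak_lorentz_norm p u w f = (SUP t\<in>{0<..}.
      ennreal t * ennreal_powr (Wfun w (wmeasure u {x. f x > ennreal t})) (1 / p))"

end

theory Submission
  imports Defs
begin

text \<open>Since \<open>M\<chi>\<^sub>E \<le> 1\<close>, the level set of the truncated function at height \<open>t\<close> is
  \<open>{M\<chi>\<^sub>E > max \<lambda> t}\<close>, which is empty for \<open>t \<ge> 1\<close>. The weak type bound gives
  \<open>W(u{M\<chi>\<^sub>E > s}) \<le> C\<^sup>p s\<^sup>-\<^sup>p \<parallel>\<chi>\<^sub>E\<parallel>\<^sup>p\<close>. Integrating \<open>p t\<^sup>p\<^sup>-\<^sup>1\<close> against it, the range
  \<open>0 < t < \<lambda>\<close> contributes only \<open>C\<^sup>p \<parallel>\<chi>\<^sub>E\<parallel>\<^sup>p\<close>, because there the level set is the fixed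
  set \<open>{M\<chi>\<^sub>E > \<lambda>}\<close> and the bound is taken at height \<open>\<lambda>\<close> rather than \<open>t\<close>; the range
  \<open>\<lambda> \<le> t < 1\<close> contributes \<open>p C\<^sup>p log(1/\<lambda>) \<parallel>\<chi>\<^sub>E\<parallel>\<^sup>p\<close>.\<close>

lemma ennreal_divide_self_le: "(x::ennreal) / x \<le> 1"
proof (cases "x = 0 \<or> x = top")
  case True then show ?thesis by (auto simp: divide_ennreal_def)
next
  case False then show ?thesis by (simp add: ennreal_divide_self less_top)
qed

lemma maximal_op_le_bound:
  assumes "\<And>y. \<bar>f y\<bar> \<le> c"
  shows "maximal_op f x \<le> ennreal c"
  unfolding maximal_op_def
proof (rule SUP_least)
  fix Q :: "'a set" assume "Q \<in> {Q\<in>cubes. x \<in> Q}"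
  then have Q: "Q \<in> sets lebesgue" by (auto simp: cubes_def)
  have "(\<integral>\<^sup>+ y\<in>Q. ennreal \<bar>f y\<bar> \<partial>lebesgue) \<le> (\<integral>\<^sup>+ y. ennreal c * indicator Q y \<partial>lebesgue)"
    using assms by (intro nn_integral_mono) (auto simp: indicator_def ennreal_leI)
  also have "\<dots> = ennreal c * emeasure lebesgue Q"
    using Q by (rule nn_integral_cmult_indicator)
  finally have "(\<integral>\<^sup>+ y\<in>Q. ennreal \<bar>f y\<bar> \<partial>lebesgue) / emeasure lebesgue Q
      \<le> ennreal c * (emeasure lebesgue Q / emeasure lebesgue Q)"
    unfolding ennreal_times_divide by (rule divide_right_mono_ennreal)
  also have "\<dots> \<le> ennreal c"
    using mult_left_mono[OF ennreal_divide_self_le, of "ennreal c"] by simp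
  finally show "(\<integral>\<^sup>+ y\<in>Q. ennreal \<bar>f y\<bar> \<partial>lebesgue) / emeasure lebesgue Q \<le> ennreal c" .
qed

lemma Wfun_level_set_le:
  assumes p: "0 < p" and t: "0 < t" and c: "0 \<le> c" and l: "0 \<le> l"
    and weak: "weak_lorentz_norm p u w g \<le> ennreal c * ennreal_powr (ennreal l) (1 / p)"
  shows "Wfun w (wmeasure u {x. g x > ennreal t}) \<le> ennreal (c powr p * l * t powr - p)"
proof -
  define a where "a = Wfun w (wmeasure u {x. g x > ennreal t})"
  have "ennreal t * ennreal_powr a (1 / p) \<le> weak_lorentz_norm p u w g"
    unfolding weak_lorentz_norm_def a_def using t by (intro SUP_upper) auto
  also have "\<dots> \<le> ennreal (c * l powr (1 / p))"
    using weak c l by (simp add: ennreal_powr_def ennreal_mult)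
  finally have bound: "ennreal t * ennreal_powr a (1 / p) \<le> ennreal (c * l powr (1 / p))" .
  have "a \<noteq> \<infinity>"
  proof
    assume "a = \<infinity>"
    then have "ennreal t * ennreal_powr a (1 / p) = \<infinity>"
      using t by (simp add: ennreal_powr_def ennreal_mult_top)
    with bound show False by (simp add: top_unique)
  qed
  then obtain r where a: "a = ennreal r" and r: "0 \<le> r" by (cases a) auto
  have "t * r powr (1 / p) \<le> c * l powr (1 / p)"
    using bound a r t c by (simp add: ennreal_powr_def ennreal_mult[symmetric])
  then have "(t * r powr (1 / p)) powr p \<le> (c * l powr (1 / p)) powr p"
    using t r p by (intro powr_mono2) auto
  then have "t powr p * r \<le> c powr p * l"
    using p r l t c by (simp add: powr_mult powr_powr)
  then have "r \<le> c powr p * l * t powr - p"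
    using t by (simp add: powr_minus field_simps)
  then show ?thesis unfolding a_def[symmetric] a by (rule ennreal_leI)
qed

lemma nn_integral_powr_atLeastAtMost_0:
  fixes l c p :: real
  assumes "0 < p" and "0 \<le> l" and "0 \<le> c"
  shows "(\<integral>\<^sup>+t. ennreal (c * t powr (p - 1)) * indicator {0..l} t \<partial>lborel) = ennreal (c * l powr p / p)"
proof (rule nn_integral_has_integral_lebesgue')
  have "((\<lambda>t. t powr (p - 1)) has_integral (l powr (p - 1 + 1) / (p - 1 + 1))) {0..l}"
    using assms by (intro has_integral_powr_from_0) auto
  then have "((\<lambda>t. c * t powr (p - 1)) has_integral (c * (l powr (p - 1 + 1) / (p - 1 + 1)))) {0..l}"
    by (rule has_integral_mult_right)
  then show "((\<lambda>t. c * t powr (p - 1)) has_integral (c * l powr p / p)) {0..l}"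
    by simp
qed (use assms in auto)

lemma nn_integral_divide_atLeastAtMost:
  fixes a b c :: real
  assumes "0 < a" and "a \<le> b" and "0 \<le> c"
  shows "(\<integral>\<^sup>+t. ennreal (c / t) * indicator {a..b} t \<partial>lborel) = ennreal (c * ln (b / a))"
proof (rule nn_integral_has_integral_lebesgue')
  have "((\<lambda>t. 1 / t) has_integral (ln b - ln a)) {a..b}"
  proof (rule fundamental_theorem_of_calculus)
    fix x assume "x \<in> {a..b}"
    then have "(ln has_real_derivative 1 / x) (at x within {a..b})"
      using assms by (auto intro!: derivative_eq_intros)
    then show "(ln has_vector_derivative 1 / x) (at x within {a..b})"
      by (simp only: has_real_derivative_iff_has_vector_derivative)
  qed fact
  then have "((\<lambda>t. c * (1 / t)) has_integral (c * (ln b - ln a))) {a..b}"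
    by (rule has_integral_mult_right)
  then show "((\<lambda>t. c / t) has_integral (c * ln (b / a))) {a..b}"
    using assms by (simp add: ln_div)
qed (use assms in auto)

lemma truncation_level_set:
  fixes g :: "'a \<Rightarrow> ennreal"
  assumes "0 \<le> t"
  shows "{x. ennreal t < (if ennreal lam < g x then g x else 0)} = {x. ennreal (max lam t) < g x}"
proof -
  have "ennreal (max lam t) = max (ennreal lam) (ennreal t)"
    by (simp add: max_of_mono[symmetric] mono_def ennreal_leI)
  then show ?thesis
    using assms by (auto simp: max_less_iff_conj)
qed

lemma truncated_integrand_le:
  fixes \<Phi> :: "real \<Rightarrow> ennreal"
  assumes p: "0 < p" and lam: "0 < lam" and t: "0 < t"
    and weak: "\<And>s. 0 < s \<Longrightarrow> \<Phi> s \<le> ennreal (A * s powr - p)"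
    and vanish: "\<And>s. 1 \<le> s \<Longrightarrow> \<Phi> s = 0"
  shows "ennreal (p * t powr (p - 1)) * \<Phi> (max lam t)
    \<le> ennreal (p * A * lam powr - p * t powr (p - 1)) * indicator {0..lam} t
      + ennreal (p * A / t) * indicator {lam..1} t"
proof -
  have factor: "0 \<le> p * t powr (p - 1)" using p by simp
  consider "t \<le> lam" | "lam < t" "t \<le> 1" | "1 < t" by linarith
  then show ?thesis
  proof cases
    case 1
    have "ennreal (p * t powr (p - 1)) * \<Phi> (max lam t)
        \<le> ennreal (p * t powr (p - 1)) * ennreal (A * lam powr - p)"
      using 1 weak[OF lam] by (intro mult_left_mono) (auto simp: max_def)
    also have "\<dots> = ennreal (p * A * lam powr - p * t powr (p - 1))"
      by (subst ennreal_mult'[OF factor, symmetric]) (simp add: mult_ac)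
    finally show ?thesis using 1 t by (simp add: add_increasing2)
  next
    case 2
    have "ennreal (p * t powr (p - 1)) * \<Phi> (max lam t)
        \<le> ennreal (p * t powr (p - 1)) * ennreal (A * t powr - p)"
      using 2 weak[OF t] by (intro mult_left_mono) auto
    also have "\<dots> = ennreal (p * A * (t powr (p - 1) * t powr - p))"
      by (subst ennreal_mult'[OF factor, symmetric]) (simp add: mult_ac)
    also have "t powr (p - 1) * t powr - p = t powr - 1"
      by (simp add: powr_add[symmetric])
    also have "\<dots> = 1 / t"
      using t by (simp add: powr_minus_divide)
    finally show ?thesis using 2 by (simp add: add_increasing)
  next
    case 3
    then show ?thesis using vanish[of "max lam t"] by simp
  qed
qed

lemma lorentz_pow_truncation_le:
  fixes g :: "'a::euclidean_space \<Rightarrow> ennreal"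
  assumes p: "0 < p" and lam: "0 < lam" "lam \<le> 1" and A: "0 \<le> A"
    and g_le_1: "\<And>x. g x \<le> 1"
    and weak: "\<And>t. 0 < t \<Longrightarrow> Wfun w (wmeasure u {x. g x > ennreal t}) \<le> ennreal (A * t powr - p)"
  shows "lorentz_pow p u w (\<lambda>x. if g x > ennreal lam then g x else 0)
    \<le> ennreal (A * (1 + p * ln (1 / lam)))"
proof -
  define \<Phi> where "\<Phi> s = Wfun w (wmeasure u {x. g x > ennreal s})" for s
  have vanish: "\<Phi> s = 0" if "1 \<le> s" for s
  proof -
    have "1 \<le> ennreal s"
      using ennreal_leI[OF that] by simp
    then have "g x \<le> ennreal s" for x
      using g_le_1[of x] by (rule order.trans[rotated])
    then have "{x. g x > ennreal s} = {}"
      by (simp add: not_less[symmetric])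
    then show ?thesis by (simp add: \<Phi>_def Wfun_def wmeasure_def)
  qed
  have "lorentz_pow p u w (\<lambda>x. if g x > ennreal lam then g x else 0)
      = (\<integral>\<^sup>+t\<in>{0<..}. ennreal (p * t powr (p - 1)) * \<Phi> (max lam t) \<partial>lborel)"
    unfolding lorentz_pow_def \<Phi>_def
    by (intro set_nn_integral_cong refl) (subst truncation_level_set; simp)
  also have "\<dots> \<le> (\<integral>\<^sup>+t. ennreal (p * A * lam powr - p * t powr (p - 1)) * indicator {0..lam} t
      + ennreal (p * A / t) * indicator {lam..1} t \<partial>lborel)"
    using truncated_integrand_le[OF p lam(1) _ weak[folded \<Phi>_def] vanish]
    by (intro nn_integral_mono) (simp split: split_indicator)
  also have "\<dots> = ennreal (p * A * lam powr - p * lam powr p / p) + ennreal (p * A * ln (1 / lam))"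
    using p lam A
    by (simp add: nn_integral_add nn_integral_powr_atLeastAtMost_0 nn_integral_divide_atLeastAtMost)
  also have "\<dots> = ennreal (A * (1 + p * ln (1 / lam)))"
  proof -
    have "p * A * lam powr - p * lam powr p / p = A"
      using p lam by (simp add: powr_minus)
    then show ?thesis
      using p lam A by (subst ennreal_plus[symmetric]) (auto simp: distrib_left)
  qed
  finally show ?thesis .
qed

lemma lorentz_pow_truncated_maximal_le:
  fixes f :: "'a::euclidean_space \<Rightarrow> real"
  assumes p: "0 < p" and C: "0 < C" and lam: "0 < lam" "lam \<le> 1"
    and f_le_1: "\<And>y. \<bar>f y\<bar> \<le> 1"
    and weak_type: "weak_lorentz_norm p u w (maximal_op f)
      \<le> ennreal C * lorentz_norm p u w (\<lambda>x. ennreal \<bar>f x\<bar>)"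
  shows "lorentz_pow p u w (\<lambda>x. if maximal_op f x > ennreal lam then maximal_op f x else 0)
    \<le> ennreal (C powr p * (1 + p * ln (1 / lam))) * lorentz_pow p u w (\<lambda>x. ennreal \<bar>f x\<bar>)"
proof (cases "lorentz_pow p u w (\<lambda>x. ennreal \<bar>f x\<bar>)")
  case (real l)
  have "Wfun w (wmeasure u {x. maximal_op f x > ennreal t}) \<le> ennreal (C powr p * l * t powr - p)"
    if "0 < t" for t
    using weak_type unfolding lorentz_norm_def real(2)
    by (rule Wfun_level_set_le[OF p that less_imp_le[OF C] real(1)])
  then have "lorentz_pow p u w (\<lambda>x. if maximal_op f x > ennreal lam then maximal_op f x else 0)
      \<le> ennreal (C powr p * l * (1 + p * ln (1 / lam)))"
    using maximal_op_le_bound[of f 1, OF f_le_1] lam real(1)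
    by (intro lorentz_pow_truncation_le[OF p]) auto
  also have "\<dots> = ennreal (C powr p * (1 + p * ln (1 / lam))) * ennreal l"
    using p lam real(1) by (simp add: ennreal_mult[symmetric] mult_ac)
  finally show ?thesis unfolding real(2) .
next
  case top
  have "0 < 1 + p * ln (1 / lam)"
    using p lam by (simp add: add_pos_nonneg)
  then show ?thesis using C unfolding top by (simp add: ennreal_mult_top)
qed

theorem lemma2p1:
  fixes u :: "'a::euclidean_space \<Rightarrow> real" and w :: "real \<Rightarrow> real" and p :: real
  assumes "0 < p"
    and "weight_Rd u" and "weight_pos w"
    and "\<exists>C>0. \<forall>f. f \<in> borel_measurable lebesgue \<longrightarrow>
           weak_lorentz_norm p u w (maximal_op f)
             \<le> ennreal C * lorentz_norm p u w (\<lambda>x. ennreal \<bar>f x\<bar>)"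
  shows "\<exists>K>0. \<forall>lam E. 0 < lam \<and> lam < 1 \<and> E \<in> sets borel \<longrightarrow>
           lorentz_pow p u w
             (\<lambda>x. if maximal_op (indicator E) x > ennreal lam
                   then maximal_op (indicator E) x else 0)
           \<le> ennreal (K * (1 + ln (1 / lam)))
               * lorentz_pow p u w (\<lambda>x. ennreal \<bar>indicator E x :: real\<bar>)"
proof -
  obtain C where C: "C > 0" and bounded: "\<And>f. f \<in> borel_measurable lebesgue \<Longrightarrow>
      weak_lorentz_norm p u w (maximal_op f) \<le> ennreal C * lorentz_norm p u w (\<lambda>x. ennreal \<bar>f x\<bar>)"
    using assms(4) by blast
  define K where "K = C powr p * max 1 p"
  show ?thesis
  proof (intro exI[of _ K] conjI allI impI)
    show "K > 0" using C by (simp add: K_def)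
    fix lam :: real and E :: "'a set"
    assume "0 < lam \<and> lam < 1 \<and> E \<in> sets borel"
    then have lam: "0 < lam" "lam < 1" and E: "E \<in> sets borel" by auto
    have "(indicator E :: 'a \<Rightarrow> real) \<in> borel_measurable lebesgue"
      using E by (intro borel_measurable_indicator) (simp add: sets_completionI_sets)
    note truncated = lorentz_pow_truncated_maximal_le[OF \<open>0 < p\<close> C lam(1) less_imp_le[OF lam(2)]
        _ bounded[OF this]]
    have "1 + p * ln (1 / lam) \<le> max 1 p * (1 + ln (1 / lam))"
      using lam by (simp add: distrib_left add_mono mult_right_mono)
    then have "C powr p * (1 + p * ln (1 / lam)) \<le> K * (1 + ln (1 / lam))"
      unfolding K_def mult.assoc by (rule mult_left_mono) simp
    then show "lorentz_pow p u w (\<lambda>x. if maximal_op (indicator E) x > ennreal lam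
        then maximal_op (indicator E) x else 0)
      \<le> ennreal (K * (1 + ln (1 / lam))) * lorentz_pow p u w (\<lambda>x. ennreal \<bar>indicator E x :: real\<bar>)"
      by (intro order.trans[OF truncated] mult_right_mono ennreal_leI) auto
  qed
qed

end
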